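(* Let $n,m$ be fixed, $V^*\subset V_1\cap V_2$ fixed, $W$ an obfuscating set and $\mathfrak{o}\in\mathfrak{O}_W$. Let $F=F^{(n,m)}_{c,\theta}$ be a nominatable distribution supported on $\mathcal{G}^a_{n,m}=\{(g_1,g_2)\in\mathcal{G}_n\times\mathcal{G}_m:\mathcal{I}(v;g_2)=\{v\}\text{ for all }v\in V^*\}$. For $(g_1,g_2)\in\mathcal{G}^a_{n,m}$ let $(g_1,[\mathfrak{o}(g_2)])=\{(g_1,\tilde g_2)\in\mathcal{G}^a_{n,m}:\tilde g_2\simeq g_2\}$, and for $w\in W$, $u\in V_2$ let $(g_1,[\mathfrak{o}(g_2)])_{w=\mathfrak{o}(u)}=\{(g_1,\tilde g_2)\in\mathcal{G}^a_{n,m}:\tilde g_2=\sigma(g_2)$ for some isomorphism $\sigma$ with $\sigma(\mathfrak{o}^{-1}(w))=u\}$, and $(g_1,[\mathfrak{o}(g_2)])_{w\in\mathfrak{o}(S)}=\bigcup_{u\in S}(g_1,[\mathfrak{o}(g_2)])_{w=\mathfrak{o}(u)}$ for $S\subset V_2$. Choose representatives $(g_1^{(i)},g_2^{(i)})$, $i\in[h]$, so that the sets $(g_1^{(i)},[\mathfrak{o}(g_2^{(i)})])$ partition $\mathcal{G}^a_{n,m}$, and for $u\in W$ put $P^i_u=\mathbb{P}_F\big((g_1^{(i)},[\mathfrak{o}(g_2^{(i)})])_{u\in\mathfrak{o}(V^* )}\mid(g_1^{(i)},[\mathfrak{o}(g_2^{(i)})])\big)$. Define $\Phi^*(g_1^{(i)},\mathfrak{o}(g_2^{(i)}),V^*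 )$ to be the ordering of $W$ in which, for each $j=1,\dots,m$, the $j$-th element is a maximizer of $P^i_u$ over $u\in W$ not among the first $j-1$ elements (ties broken in a fixed arbitrary manner); and for any other $(g_1,g_2)$ in the class $(g_1^{(i)},[\mathfrak{o}(g_2^{(i)})])$, choose an isomorphism $\sigma$ with $\mathfrak{o}(g_2)=\sigma(\mathfrak{o}(g_2^{(i)}))$ and set $\Phi^*(g_1,\mathfrak{o}(g_2),V^* )=\sigma(\Phi^*(g_1^{(i)},\mathfrak{o}(g_2^{(i)}),V^* ))$. Then for every $k\in[m-1]$ and every VN scheme $\Phi\in\mathcal{V}_{nm}$, $L^{(1)}_k(\Phi^*,V^* )\le L^{(1)}_k(\Phi,V^* )$ and $L^{(2)}_k(\Phi^*,V^* )\le L^{(2)}_k(\Phi,V^* )$; i.e. $\Phi^*$ is level-$k$ Bayes optimal for both losses simultaneously for all $k$.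
   Context: $\mathcal{G}_n$ is the set of labeled graphs on $n$ vertices and $\simeq$ denotes graph isomorphism. A nominatable distribution $F^{(n,m)}_{c,\theta}$ is a distribution on $\mathcal{G}_n\times\mathcal{G}_m$ with vertex sets $V_1=\{v_1,\dots,v_n\}$, $V_2=\{u_1,\dots,u_m\}$, $v_i=u_i$ for $i\le c$ (the core), disjoint junk sets $V_1\setminus C$, $V_2\setminus C$, whose induced subgraphs are conditionally independent given $\theta$. An obfuscating set $W$ is disjoint from $V_1,V_2$; $\mathfrak{O}_W$ is the set of bijections $\mathfrak{o}:V_2\to W$, and $\mathfrak{o}(g_2)$ is $g_2$ with vertices relabeled by $\mathfrak{o}$. For $u\in V(g)$, $\mathcal{I}(u;g)$ is the orbit of $u$ under automorphisms of $g$. A VN scheme $\Phi\in\mathcal{V}_{nm}$ assigns to $(g_1,\mathfrak{o}(g_2),V^* )$ a total ordering of $W$ such that the set of positions of $\mathfrak{o}(\mathcal{I}(u;g_2))$ does not depend on $\mathfrak{o}\in\mathfrak{O}_W$ (for all $g_1,g_2,V^*,u$). With $(G_1,G_2)\sim F$ and $\mathrm{rank}$ denoting position in the ordering, $L^{(1)}_k(\Phi,V^* )=\frac1{|V^*|}\sum_{v\in V^*}\mathbb{P}(\mathrm{rank}_{\Phi(G_1,\mathfrak{o}(G_2),V^* )}(\mathfrak{o}(v))\ge k+1)$ (recall error) and $L^{(2)}_k(\Phi,V^* )=1-\frac1k\sum_{v\in V^*}\mathbb{P}(\mathrm{rank}_{\Phi(G_1,\mathfrak{o}(G_2),V^* )}(\mathfrak{o}(v))\le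 k)$ (precision error). *)

theory Defs
  imports "HOL-Probability.Probability"
begin

(* A labeled simple graph on vertex set V is given by its edge set:
   a set of 2-element subsets of V. *)
definition graph_on :: "'a set \<Rightarrow> 'a set set \<Rightarrow> bool" where
  "graph_on V E \<longleftrightarrow> (\<forall>e\<in>E. e \<subseteq> V \<and> card e = 2)"

definition relabel :: "('a \<Rightarrow> 'b) \<Rightarrow> 'a set set \<Rightarrow> 'b set set" where
  "relabel f E = (\<lambda>e. f ` e) ` E"

definition is_iso :: "'a set \<Rightarrow> 'b set \<Rightarrow> ('a \<Rightarrow> 'b) \<Rightarrow> 'a set set \<Rightarrow> 'b set set \<Rightarrow> bool" where
  "is_iso V V' \<sigma> E E' \<longleftrightarrow> bij_betw \<sigma> V V' \<and> relabel \<sigma> E = E'"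

definition orbit :: "'a set \<Rightarrow> 'a set set \<Rightarrow> 'a \<Rightarrow> 'a set" where
  "orbit V E u = {\<sigma> u | \<sigma>. is_iso V V \<sigma> E E}"

definition induced :: "'a set set \<Rightarrow> 'a set \<Rightarrow> 'a set set" where
  "induced E S = {e \<in> E. e \<subseteq> S}"

(* nominatable distribution on G_n x G_m: vertex sets V1, V2 with core C = V1 \<inter> V2,
   support in graphs on V1 times graphs on V2, and the subgraphs induced on the junk
   sets V1 - C and V2 - C independent (theta being fixed). *)
definition nominatable :: "'v set \<Rightarrow> 'v set \<Rightarrow> ('v set set \<times> 'v set set) pmf \<Rightarrow> bool" where
  "nominatable V1 V2 F \<longleftrightarrow> finite V1 \<and> finite V2 \<and>
     set_pmf F \<subseteq> {(g1, g2). graph_on V1 g1 \<and> graph_on V2 g2} \<and>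
     map_pmf (\<lambda>(g1, g2). (induced g1 (V1 - V2), induced g2 (V2 - V1))) F =
       pair_pmf (map_pmf (\<lambda>(g1, g2). induced g1 (V1 - V2)) F)
                (map_pmf (\<lambda>(g1, g2). induced g2 (V2 - V1)) F)"

definition is_ordering :: "'w set \<Rightarrow> 'w list \<Rightarrow> bool" where
  "is_ordering W L \<longleftrightarrow> distinct L \<and> set L = W"

(* rank (1-based position) of w in the ordering L *)
definition rank :: "'w list \<Rightarrow> 'w \<Rightarrow> nat" where
  "rank L w = Suc (LEAST i. i < length L \<and> L ! i = w)"

definition positions :: "'w list \<Rightarrow> 'w set \<Rightarrow> nat set" where
  "positions L S = {i. i < length L \<and> L ! i \<in> S}"

definition Ga :: "'v set \<Rightarrow> 'v set \<Rightarrow> 'v set \<Rightarrow> ('v set set \<times> 'v set set) set" where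
  "Ga V1 V2 Vs = {(g1, g2). graph_on V1 g1 \<and> graph_on V2 g2 \<and> (\<forall>v\<in>Vs. orbit V2 g2 v = {v})}"

definition cls :: "'v set \<Rightarrow> 'v set \<Rightarrow> 'v set \<Rightarrow> 'v set set \<Rightarrow> 'v set set
     \<Rightarrow> ('v set set \<times> 'v set set) set" where
  "cls V1 V2 Vs g1 g2 = {(g1', g2') \<in> Ga V1 V2 Vs. g1' = g1 \<and> (\<exists>\<sigma>. is_iso V2 V2 \<sigma> g2 g2')}"

definition cls_at :: "'v set \<Rightarrow> 'v set \<Rightarrow> 'v set \<Rightarrow> ('v \<Rightarrow> 'w) \<Rightarrow> 'v set set \<Rightarrow> 'v set set
     \<Rightarrow> 'w \<Rightarrow> 'v \<Rightarrow> ('v set set \<times> 'v set set) set" where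
  "cls_at V1 V2 Vs ob g1 g2 w u = {(g1', g2') \<in> Ga V1 V2 Vs. g1' = g1 \<and>
      (\<exists>\<sigma>. is_iso V2 V2 \<sigma> g2 g2' \<and> \<sigma> (inv_into V2 ob w) = u)}"

definition cls_in :: "'v set \<Rightarrow> 'v set \<Rightarrow> 'v set \<Rightarrow> ('v \<Rightarrow> 'w) \<Rightarrow> 'v set set \<Rightarrow> 'v set set
     \<Rightarrow> 'w \<Rightarrow> 'v set \<Rightarrow> ('v set set \<times> 'v set set) set" where
  "cls_in V1 V2 Vs ob g1 g2 w S = (\<Union>u\<in>S. cls_at V1 V2 Vs ob g1 g2 w u)"

definition cond_prob :: "'a pmf \<Rightarrow> 'a set \<Rightarrow> 'a set \<Rightarrow> real" where
  "cond_prob F A B = measure_pmf.prob F (A \<inter> B) / measure_pmf.prob F B"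

definition greedy_ordering :: "'w set \<Rightarrow> ('w \<Rightarrow> real) \<Rightarrow> 'w list \<Rightarrow> bool" where
  "greedy_ordering W P L \<longleftrightarrow> is_ordering W L \<and>
     (\<forall>j < length L. \<forall>u \<in> W - set (take j L). P u \<le> P (L ! j))"

(* Phs (a function of g1 and the obfuscated graph ob(g2), Vs fixed) arises from the
   construction of Phi*: on each class (g1,[ob(g2)]) there is a representative (r1,r2)
   where Phs is a greedy ordering for P_u = P_F(class_{u in ob(Vs)} | class), and on every
   element of the class Phs is obtained by transporting along a W-isomorphism sigma with
   ob(g2') = sigma(ob(r2)). *)
definition bayes_construction :: "('v set set \<times> 'v set set) pmf \<Rightarrow> 'v set \<Rightarrow> 'v set \<Rightarrow> 'w set
     \<Rightarrow> 'v set \<Rightarrow> ('v \<Rightarrow> 'w) \<Rightarrow> ('v set set \<Rightarrow> 'w set set \<Rightarrow> 'w list) \<Rightarrow> bool" where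
  "bayes_construction F V1 V2 W Vs ob Phs \<longleftrightarrow>
     (\<forall>(g1, g2) \<in> Ga V1 V2 Vs. \<exists>(r1, r2) \<in> cls V1 V2 Vs g1 g2.
        greedy_ordering W
          (\<lambda>u. cond_prob F (cls_in V1 V2 Vs ob r1 r2 u Vs) (cls V1 V2 Vs r1 r2))
          (Phs r1 (relabel ob r2)) \<and>
        (\<forall>(g1', g2') \<in> cls V1 V2 Vs g1 g2. \<exists>\<sigma>.
           is_iso W W \<sigma> (relabel ob r2) (relabel ob g2') \<and>
           Phs g1' (relabel ob g2') = map \<sigma> (Phs r1 (relabel ob r2))))"

definition vn_scheme :: "'v set \<Rightarrow> 'v set \<Rightarrow> 'w set
     \<Rightarrow> ('v set set \<Rightarrow> 'w set set \<Rightarrow> 'v set \<Rightarrow> 'w list) \<Rightarrow> bool" where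
  "vn_scheme V1 V2 W Phi \<longleftrightarrow>
     (\<forall>g1 g2 V' ob. graph_on V1 g1 \<and> graph_on V2 g2 \<and> V' \<subseteq> V1 \<inter> V2 \<and> bij_betw ob V2 W
        \<longrightarrow> is_ordering W (Phi g1 (relabel ob g2) V')) \<and>
     (\<forall>g1 g2 V' u ob o'. graph_on V1 g1 \<and> graph_on V2 g2 \<and> V' \<subseteq> V1 \<inter> V2 \<and> u \<in> V2 \<and>
        bij_betw ob V2 W \<and> bij_betw o' V2 W \<longrightarrow>
        positions (Phi g1 (relabel ob g2) V') (ob ` orbit V2 g2 u) =
        positions (Phi g1 (relabel o' g2) V') (o' ` orbit V2 g2 u))"

(* L^(1)_k : recall error; Ph is the scheme with Vs already plugged in *)
definition loss1 :: "('v set set \<times> 'v set set) pmf \<Rightarrow> ('v \<Rightarrow> 'w)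
     \<Rightarrow> ('v set set \<Rightarrow> 'w set set \<Rightarrow> 'w list) \<Rightarrow> 'v set \<Rightarrow> nat \<Rightarrow> real" where
  "loss1 F ob Ph Vs k = (1 / real (card Vs)) *
     (\<Sum>v\<in>Vs. measure_pmf.prob F {(g1, g2). rank (Ph g1 (relabel ob g2)) (ob v) \<ge> k + 1})"

definition loss2 :: "('v set set \<times> 'v set set) pmf \<Rightarrow> ('v \<Rightarrow> 'w)
     \<Rightarrow> ('v set set \<Rightarrow> 'w set set \<Rightarrow> 'w list) \<Rightarrow> 'v set \<Rightarrow> nat \<Rightarrow> real" where
  "loss2 F ob Ph Vs k = 1 - (1 / real k) *
     (\<Sum>v\<in>Vs. measure_pmf.prob F {(g1, g2). rank (Ph g1 (relabel ob g2)) (ob v) \<le> k})"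

end

theory Submission
  imports Defs
begin

(* Both losses are decreasing functions of the expected number of vertices of interest ranked
   among the first k, so it suffices to show that Phs maximizes this expectation on every class
   (g1, [ob(g2)]) of the support.  Every vertex of interest is fixed by all automorphisms of g2,
   so all isomorphisms from the representative r2 to g2 agree on Vs: the labels w in W that hit
   a vertex of interest at (g1, g2) are exactly those w with (g1, g2) in the event
   (r1, [ob(r2)])_{w in ob(Vs)}.  The invariance of a VN scheme (for Phs, its construction by
   transport) reduces its first k entries at (g1, ob(g2)) to those at the representative.
   Summed over the class, the expected number of hits is therefore P(class) times the sum of
   the conditional probabilities P_w over the first k entries of the ordering at the
   representative, and the greedy ordering maximizes this sum. *)

lemma graph_on_Union_subset: "graph_on V E \<Longrightarrow> \<Union>E \<subseteq> V"
  unfolding graph_on_def by blast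

lemma Union_relabel: "\<Union>(relabel f E) = f ` \<Union>E"
  unfolding relabel_def by blast

lemma relabel_comp: "relabel (g \<circ> f) E = relabel g (relabel f E)"
  unfolding relabel_def by (auto simp: image_comp)

lemma relabel_id_on:
  assumes "\<Union>E \<subseteq> V" "\<And>a. a \<in> V \<Longrightarrow> f a = a"
  shows "relabel f E = E"
proof -
  have "f ` e = id ` e" if "e \<in> E" for e
    using assms that by (intro image_cong) auto
  then show ?thesis
    unfolding relabel_def by simp
qed

lemma is_iso_relabel: "bij_betw f A B \<Longrightarrow> is_iso A B f E (relabel f E)"
  unfolding is_iso_def by simp

lemma is_iso_id: "is_iso A A id E E"
  unfolding is_iso_def relabel_def by simp

lemma is_iso_comp:
  "is_iso A B f E1 E2 \<Longrightarrow> is_iso B C g E2 E3 \<Longrightarrow> is_iso A C (g \<circ> f) E1 E3"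
  unfolding is_iso_def by (auto intro: bij_betw_trans simp: relabel_comp)

lemma is_iso_inv:
  assumes "is_iso A B f E1 E2" "\<Union>E1 \<subseteq> A"
  shows "is_iso B A (inv_into A f) E2 E1"
proof -
  have f: "bij_betw f A B" and E2: "E2 = relabel f E1"
    using assms(1) unfolding is_iso_def by auto
  have "relabel (inv_into A f) E2 = relabel (inv_into A f \<circ> f) E1"
    by (simp add: E2 relabel_comp)
  also have "\<dots> = E1"
    using assms(2) f by (intro relabel_id_on) (auto simp: bij_betw_def)
  finally show ?thesis
    using f bij_betw_inv_into unfolding is_iso_def by blast
qed

lemma rank_eq_of_positions:
  assumes "positions L {a} = positions L' {b}"
  shows "rank L a = rank L' b"
proof -
  have "(i < length L \<and> L ! i = a) \<longleftrightarrow> (i < length L' \<and> L' ! i = b)" for i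
    using assms unfolding positions_def set_eq_iff by simp
  then show ?thesis
    unfolding rank_def by simp
qed

lemma rank_le_iff:
  assumes "distinct L" "w \<in> set L"
  shows "rank L w \<le> k \<longleftrightarrow> w \<in> set (take k L)"
proof -
  obtain i where i: "i < length L" "L ! i = w"
    using assms(2) by (meson in_set_conv_nth)
  have "(LEAST i. i < length L \<and> L ! i = w) = i"
    using i assms(1) by (intro Least_equality) (auto simp: nth_eq_iff_index_eq)
  then have "rank L w = Suc i"
    unfolding rank_def by simp
  moreover have "w \<in> set (take k L) \<longleftrightarrow> i < k"
    using i assms(1) by (auto simp: in_set_conv_nth nth_eq_iff_index_eq)
  ultimately show ?thesis
    by (simp add: Suc_le_eq)
qed

lemma rank_map:
  assumes "inj_on f (set L)" "w \<in> set L"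
  shows "rank (map f L) (f w) = rank L w"
proof -
  have "(i < length (map f L) \<and> map f L ! i = f w) \<longleftrightarrow> (i < length L \<and> L ! i = w)" for i
  proof (cases "i < length L")
    case True
    then show ?thesis
      using assms by (auto simp: inj_on_eq_iff)
  qed simp
  then show ?thesis
    by (simp only: rank_def)
qed

lemma sum_le_sum_if_dominated:
  fixes P :: "'a \<Rightarrow> 'b::ordered_comm_monoid_add"
  assumes "finite A" "finite B" "card A = card B"
    and dom: "\<And>a b. a \<in> A \<Longrightarrow> b \<in> B - A \<Longrightarrow> P b \<le> P a"
  shows "sum P B \<le> sum P A"
proof -
  have "card (B - A) = card (A - B)"
    using assms(1-3) by (metis card_Diff_subset_Int inf_commute finite_Int)
  then obtain h where h: "bij_betw h (B - A) (A - B)"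
    using assms(1,2) finite_same_card_bij by (metis finite_Diff)
  have "sum P (B - A) \<le> sum (P \<circ> h) (B - A)"
  proof (rule sum_mono)
    fix b assume "b \<in> B - A"
    then show "P b \<le> (P \<circ> h) b"
      using h dom bij_betwE by fastforce
  qed
  also have "\<dots> = sum P (A - B)"
    using sum.reindex_bij_betw[OF h, of P] by (simp add: comp_def)
  finally have "sum P (B - A) \<le> sum P (A - B)" .
  moreover have "sum P A = sum P (A \<inter> B) + sum P (A - B)"
    using assms(1) by (rule sum.Int_Diff)
  moreover have "sum P B = sum P (A \<inter> B) + sum P (B - A)"
    using sum.Int_Diff[OF assms(2), of P A] by (simp add: inf_commute)
  ultimately show ?thesis
    by (simp add: add_left_mono)
qed

lemma greedy_ordering_dominates:
  assumes "greedy_ordering W P Ls" "a \<in> set (take k Ls)" "b \<in> W - set (take k Ls)"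
  shows "P b \<le> P a"
proof -
  obtain j where j: "j < k" "j < length Ls" "Ls ! j = a"
    using assms(2) by (auto simp: in_set_conv_nth)
  have "set (take j Ls) \<subseteq> set (take k Ls)"
    using j(1) by (simp add: set_take_subset_set_take)
  then have "b \<in> W - set (take j Ls)"
    using assms(3) by blast
  then show ?thesis
    using assms(1) j(2,3) unfolding greedy_ordering_def by blast
qed

lemma sum_take_le_greedy:
  fixes P :: "'w \<Rightarrow> real"
  assumes greedy: "greedy_ordering W P Ls" and L: "is_ordering W L"
  shows "(\<Sum>w\<in>set (take k L). P w) \<le> (\<Sum>w\<in>set (take k Ls). P w)"
proof (rule sum_le_sum_if_dominated)
  have "is_ordering W Ls"
    using greedy unfolding greedy_ordering_def by simp
  then show "card (set (take k Ls)) = card (set (take k L))"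
    using L unfolding is_ordering_def by (simp add: distinct_card distinct_card[symmetric])
  show "P b \<le> P a" if "a \<in> set (take k Ls)" "b \<in> set (take k L) - set (take k Ls)" for a b
  proof (rule greedy_ordering_dominates[OF greedy that(1)])
    show "b \<in> W - set (take k Ls)"
      using that(2) L unfolding is_ordering_def by (auto dest: in_set_takeD)
  qed
qed simp_all

lemma finite_Ga:
  assumes "finite V1" "finite V2"
  shows "finite (Ga V1 V2 Vs)"
proof (rule finite_subset)
  show "Ga V1 V2 Vs \<subseteq> Pow (Pow V1) \<times> Pow (Pow V2)"
    unfolding Ga_def graph_on_def by auto
qed (use assms in simp)

lemma mem_cls_iff:
  "(h1, h2) \<in> cls V1 V2 Vs g1 g2 \<longleftrightarrow>
     (h1, h2) \<in> Ga V1 V2 Vs \<and> h1 = g1 \<and> (\<exists>\<sigma>. is_iso V2 V2 \<sigma> g2 h2)"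
  unfolding cls_def by blast

lemma cls_refl: "(g1, g2) \<in> Ga V1 V2 Vs \<Longrightarrow> (g1, g2) \<in> cls V1 V2 Vs g1 g2"
  using is_iso_id by (auto simp: mem_cls_iff)

lemma cls_eq:
  assumes "(g1, g2) \<in> Ga V1 V2 Vs" "(h1, h2) \<in> cls V1 V2 Vs g1 g2"
  shows "cls V1 V2 Vs h1 h2 = cls V1 V2 Vs g1 g2"
proof -
  obtain \<sigma> where h1: "h1 = g1" and \<sigma>: "is_iso V2 V2 \<sigma> g2 h2"
    using assms(2) by (auto simp: mem_cls_iff)
  have "\<Union>g2 \<subseteq> V2"
    using assms(1) by (auto simp: Ga_def dest: graph_on_Union_subset)
  then have \<sigma>': "is_iso V2 V2 (inv_into V2 \<sigma>) h2 g2"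
    using \<sigma> by (intro is_iso_inv)
  have "(x1, x2) \<in> cls V1 V2 Vs h1 h2 \<longleftrightarrow> (x1, x2) \<in> cls V1 V2 Vs g1 g2" for x1 x2
    unfolding mem_cls_iff h1 using is_iso_comp[OF \<sigma>] is_iso_comp[OF \<sigma>'] by blast
  then show ?thesis
    by auto
qed

lemma cls_in_subset_cls: "cls_in V1 V2 Vs ob g1 g2 w S \<subseteq> cls V1 V2 Vs g1 g2"
  unfolding cls_in_def cls_at_def cls_def by blast

lemma iso_eq_at_fixed_point:
  assumes \<sigma>: "is_iso V V \<sigma> E E'" and \<tau>: "is_iso V V \<tau> E E'"
    and "\<Union>E \<subseteq> V" "y \<in> V" and fixed: "orbit V E' (\<sigma> y) = {\<sigma> y}"
  shows "\<tau> y = \<sigma> y"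
proof -
  have "is_iso V V (\<tau> \<circ> inv_into V \<sigma>) E' E'"
    using is_iso_comp[OF is_iso_inv[OF \<sigma> assms(3)] \<tau>] .
  moreover have "(\<tau> \<circ> inv_into V \<sigma>) (\<sigma> y) = \<tau> y"
    using \<sigma> assms(4) by (simp add: is_iso_def bij_betw_def)
  ultimately have "\<tau> y \<in> orbit V E' (\<sigma> y)"
    unfolding orbit_def by (metis (mono_tags, lifting) mem_Collect_eq)
  then show ?thesis
    using fixed by blast
qed

lemma hits_eq_image:
  assumes ob: "bij_betw ob V2 W" and Vs: "Vs \<subseteq> V2"
    and r: "(r1, r2) \<in> Ga V1 V2 Vs" and g: "(g1, g2) \<in> cls V1 V2 Vs r1 r2"
    and \<rho>: "is_iso V2 W \<rho> g2 (relabel ob r2)"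
  shows "{w \<in> W. (g1, g2) \<in> cls_in V1 V2 Vs ob r1 r2 w Vs} = \<rho> ` Vs"
proof -
  have gGa: "(g1, g2) \<in> Ga V1 V2 Vs" and g1: "g1 = r1"
    using g by (auto simp: mem_cls_iff)
  have r2: "\<Union>r2 \<subseteq> V2" and g2: "\<Union>g2 \<subseteq> V2" and fixed: "\<forall>v\<in>Vs. orbit V2 g2 v = {v}"
    using r gGa by (auto simp: Ga_def graph_on_def)
  define \<tau> where "\<tau> = inv_into V2 \<rho> \<circ> ob"
  have \<tau>: "is_iso V2 V2 \<tau> r2 g2"
    unfolding \<tau>_def using is_iso_comp[OF is_iso_relabel[OF ob] is_iso_inv[OF \<rho> g2]] .
  have \<rho>_bij: "bij_betw \<rho> V2 W"
    using \<rho> by (simp add: is_iso_def)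
  have "(g1, g2) \<in> cls_in V1 V2 Vs ob r1 r2 w Vs \<longleftrightarrow> w \<in> \<rho> ` Vs" if w: "w \<in> W" for w
  proof -
    define y where "y = inv_into V2 ob w"
    have y: "y \<in> V2" "\<tau> y = inv_into V2 \<rho> w"
      using ob w by (auto simp: y_def \<tau>_def bij_betw_def f_inv_into_f)
    have "(g1, g2) \<in> cls_in V1 V2 Vs ob r1 r2 w Vs \<longleftrightarrow> (\<exists>\<sigma>. is_iso V2 V2 \<sigma> r2 g2 \<and> \<sigma> y \<in> Vs)"
      unfolding cls_in_def cls_at_def y_def using gGa g1 by blast
    also have "\<dots> \<longleftrightarrow> \<tau> y \<in> Vs"
      using \<tau> iso_eq_at_fixed_point[OF _ \<tau> r2 y(1)] fixed by metis
    also have "\<dots> \<longleftrightarrow> w \<in> \<rho> ` Vs"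
      using y(2) w \<rho>_bij Vs
      by (auto simp: bij_betw_def inv_into_f_f f_inv_into_f subset_iff)
    finally show ?thesis .
  qed
  moreover have "\<rho> ` Vs \<subseteq> W"
    using \<rho>_bij Vs bij_betw_imp_surj_on by blast
  ultimately show ?thesis
    by blast
qed

lemma card_rank_le_transport:
  assumes "distinct L" "inj_on \<rho> Vs" "\<rho> ` Vs \<subseteq> set L"
    and rank: "\<And>v. v \<in> Vs \<Longrightarrow> rank M (f v) = rank L (\<rho> v)"
  shows "card {v \<in> Vs. rank M (f v) \<le> k} = card (\<rho> ` Vs \<inter> set (take k L))"
proof -
  have "rank M (f v) \<le> k \<longleftrightarrow> \<rho> v \<in> set (take k L)" if "v \<in> Vs" for v
    using rank[OF that] rank_le_iff[OF assms(1)] assms(3) that by auto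
  then have "card {v \<in> Vs. rank M (f v) \<le> k} = card {v \<in> Vs. \<rho> v \<in> set (take k L)}"
    by (metis (mono_tags, lifting))
  also have "\<dots> = card (\<rho> ` {v \<in> Vs. \<rho> v \<in> set (take k L)})"
    using assms(2) by (intro card_image[symmetric]) (auto intro: inj_on_subset)
  also have "\<rho> ` {v \<in> Vs. \<rho> v \<in> set (take k L)} = \<rho> ` Vs \<inter> set (take k L)"
    by blast
  finally show ?thesis .
qed

lemma card_hits_transport:
  assumes ob: "bij_betw ob V2 W" and Vs: "Vs \<subseteq> V2"
    and r: "(r1, r2) \<in> Ga V1 V2 Vs" and g: "(g1, g2) \<in> cls V1 V2 Vs r1 r2"
    and \<rho>: "is_iso V2 W \<rho> g2 (relabel ob r2)" and L: "is_ordering W L"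
    and rank: "\<And>v. v \<in> Vs \<Longrightarrow> rank M (ob v) = rank L (\<rho> v)"
  shows "card {v \<in> Vs. rank M (ob v) \<le> k} =
    card {w \<in> set (take k L). (g1, g2) \<in> cls_in V1 V2 Vs ob r1 r2 w Vs}"
proof -
  have hits: "{w \<in> W. (g1, g2) \<in> cls_in V1 V2 Vs ob r1 r2 w Vs} = \<rho> ` Vs"
    using hits_eq_image[OF ob Vs r g \<rho>] .
  have "inj_on \<rho> Vs"
    using \<rho> Vs by (auto simp: is_iso_def bij_betw_def intro: inj_on_subset)
  then have "card {v \<in> Vs. rank M (ob v) \<le> k} = card (\<rho> ` Vs \<inter> set (take k L))"
    using L hits rank by (intro card_rank_le_transport) (auto simp: is_ordering_def)
  also have "\<rho> ` Vs \<inter> set (take k L) = {w \<in> set (take k L). (g1, g2) \<in> cls_in V1 V2 Vs ob r1 r2 w Vs}"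
    using L hits[symmetric] by (auto simp: is_ordering_def dest: in_set_takeD)
  finally show ?thesis .
qed

lemma vn_scheme_is_ordering:
  assumes "vn_scheme V1 V2 W Phi" "graph_on V1 g1" "graph_on V2 g2" "V' \<subseteq> V1 \<inter> V2"
    "bij_betw ob V2 W"
  shows "is_ordering W (Phi g1 (relabel ob g2) V')"
  using assms unfolding vn_scheme_def by blast

lemma vn_scheme_rank_relabel:
  assumes vn: "vn_scheme V1 V2 W Phi" and "graph_on V1 g1" "graph_on V2 g2" "V' \<subseteq> V1 \<inter> V2"
    and "bij_betw ob V2 W" "bij_betw \<rho> V2 W" "v \<in> V2" and fixed: "orbit V2 g2 v = {v}"
  shows "rank (Phi g1 (relabel ob g2) V') (ob v) = rank (Phi g1 (relabel \<rho> g2) V') (\<rho> v)"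
proof (rule rank_eq_of_positions)
  have "positions (Phi g1 (relabel ob g2) V') (ob ` orbit V2 g2 v) =
      positions (Phi g1 (relabel \<rho> g2) V') (\<rho> ` orbit V2 g2 v)"
    using conjunct2[OF vn[unfolded vn_scheme_def], rule_format, of g1 g2 V' v ob \<rho>] assms(2-7)
    by blast
  then show "positions (Phi g1 (relabel ob g2) V') {ob v} = positions (Phi g1 (relabel \<rho> g2) V') {\<rho> v}"
    using fixed by simp
qed

lemma card_hits_vn_scheme:
  assumes vn: "vn_scheme V1 V2 W Phi" and ob: "bij_betw ob V2 W" and Vs: "Vs \<subseteq> V1 \<inter> V2"
    and r: "(r1, r2) \<in> Ga V1 V2 Vs" and g: "(g1, g2) \<in> cls V1 V2 Vs r1 r2"
  shows "card {v \<in> Vs. rank (Phi g1 (relabel ob g2) Vs) (ob v) \<le> k} =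
    card {w \<in> set (take k (Phi r1 (relabel ob r2) Vs)). (g1, g2) \<in> cls_in V1 V2 Vs ob r1 r2 w Vs}"
proof -
  obtain \<tau> where \<tau>: "is_iso V2 V2 \<tau> r2 g2" and g1: "g1 = r1" and gGa: "(g1, g2) \<in> Ga V1 V2 Vs"
    using g by (auto simp: mem_cls_iff)
  have r_graphs: "graph_on V1 r1" "graph_on V2 r2" and g2: "graph_on V2 g2"
    and fixed: "\<forall>v\<in>Vs. orbit V2 g2 v = {v}"
    using r gGa g1 by (auto simp: Ga_def)
  define \<rho> where "\<rho> = ob \<circ> inv_into V2 \<tau>"
  have \<rho>: "is_iso V2 W \<rho> g2 (relabel ob r2)"
    unfolding \<rho>_def using is_iso_comp[OF is_iso_inv[OF \<tau>] is_iso_relabel[OF ob]]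
      graph_on_Union_subset[OF r_graphs(2)] by blast
  then have relabel_\<rho>: "relabel \<rho> g2 = relabel ob r2" and \<rho>_bij: "bij_betw \<rho> V2 W"
    by (auto simp: is_iso_def)
  have "rank (Phi g1 (relabel ob g2) Vs) (ob v) = rank (Phi r1 (relabel ob r2) Vs) (\<rho> v)"
    if "v \<in> Vs" for v
  proof -
    have "rank (Phi g1 (relabel ob g2) Vs) (ob v) = rank (Phi g1 (relabel \<rho> g2) Vs) (\<rho> v)"
    proof (rule vn_scheme_rank_relabel[OF vn _ g2 Vs ob \<rho>_bij])
      show "graph_on V1 g1" "v \<in> V2" "orbit V2 g2 v = {v}"
        using that r_graphs(1) g1 Vs fixed by auto
    qed
    then show ?thesis
      by (simp add: relabel_\<rho> g1)
  qed
  moreover have "is_ordering W (Phi r1 (relabel ob r2) Vs)"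
    using vn_scheme_is_ordering[OF vn r_graphs Vs ob] .
  ultimately show ?thesis
    using Vs by (intro card_hits_transport[OF ob _ r g \<rho>]) auto
qed

lemma card_hits_map:
  assumes ob: "bij_betw ob V2 W" and Vs: "Vs \<subseteq> V2"
    and r: "(r1, r2) \<in> Ga V1 V2 Vs" and g: "(g1, g2) \<in> cls V1 V2 Vs r1 r2"
    and \<sigma>: "is_iso W W \<sigma> (relabel ob r2) (relabel ob g2)" and L: "is_ordering W L"
  shows "card {v \<in> Vs. rank (map \<sigma> L) (ob v) \<le> k} =
    card {w \<in> set (take k L). (g1, g2) \<in> cls_in V1 V2 Vs ob r1 r2 w Vs}"
proof -
  define \<rho> where "\<rho> = inv_into W \<sigma> \<circ> ob"
  have "\<Union>r2 \<subseteq> V2"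
    using r by (auto simp: Ga_def graph_on_def)
  then have "\<Union>(relabel ob r2) \<subseteq> W"
    using ob by (auto simp: Union_relabel bij_betw_def)
  then have \<rho>: "is_iso V2 W \<rho> g2 (relabel ob r2)"
    unfolding \<rho>_def using is_iso_comp[OF is_iso_relabel[OF ob] is_iso_inv[OF \<sigma>]] by blast
  have \<sigma>_bij: "bij_betw \<sigma> W W"
    using \<sigma> by (simp add: is_iso_def)
  have "rank (map \<sigma> L) (ob v) = rank L (\<rho> v)" if "v \<in> Vs" for v
  proof -
    have "ob v \<in> W"
      using that Vs ob by (auto simp: bij_betw_def)
    then have "ob v = \<sigma> (\<rho> v)" "\<rho> v \<in> W"
      using \<sigma>_bij by (auto simp: \<rho>_def bij_betw_def f_inv_into_f inv_into_into)
    moreover have "inj_on \<sigma> (set L)"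
      using L \<sigma>_bij by (simp add: is_ordering_def bij_betw_def)
    ultimately show ?thesis
      using L rank_map[of \<sigma> L "\<rho> v"] by (simp add: is_ordering_def)
  qed
  then show ?thesis
    using card_hits_transport[OF ob Vs r g \<rho> L] by blast
qed

lemma sum_prob_eq_sum_pmf_card:
  assumes "finite T" "finite X" "X \<subseteq> set_pmf F" "\<And>v. v \<in> T \<Longrightarrow> set_pmf F \<inter> E v \<subseteq> X"
  shows "(\<Sum>v\<in>T. measure_pmf.prob F (E v)) = (\<Sum>x\<in>X. pmf F x * card {v \<in> T. x \<in> E v})"
proof -
  have "measure_pmf.prob F (E v) = (\<Sum>x\<in>X. if x \<in> E v then pmf F x else 0)" if "v \<in> T" for v
  proof -
    have "measure_pmf.prob F (E v) = measure_pmf.prob F (X \<inter> E v)"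
      using assms(3) assms(4)[OF that] measure_Int_set_pmf[of F "E v"] measure_Int_set_pmf[of F "X \<inter> E v"]
      by (metis Int_absorb2 Int_commute Int_left_commute)
    also have "\<dots> = sum (pmf F) (X \<inter> E v)"
      using assms(2) by (simp add: measure_measure_pmf_finite)
    finally show ?thesis
      using assms(2) by (simp add: sum.inter_filter Int_def)
  qed
  then have "(\<Sum>v\<in>T. measure_pmf.prob F (E v)) = (\<Sum>x\<in>X. \<Sum>v\<in>T. if x \<in> E v then pmf F x else 0)"
    by (simp add: sum.swap[of _ X])
  also have "\<dots> = (\<Sum>x\<in>X. pmf F x * card {v \<in> T. x \<in> E v})"
    using assms(1) by (simp add: sum.If_cases Int_def mult.commute)
  finally show ?thesis .
qed

lemma prob_eq_mult_cond_prob: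
  assumes "A \<subseteq> B"
  shows "measure_pmf.prob F A = measure_pmf.prob F B * cond_prob F A B"
proof (cases "measure_pmf.prob F B = 0")
  case True
  then show ?thesis
    using measure_pmf.finite_measure_mono[OF assms, of F] measure_nonneg[of F A] by simp
next
  case False
  then show ?thesis
    using assms by (simp add: cond_prob_def Int_absorb2)
qed

definition top_k_hits :: "('v \<Rightarrow> 'w) \<Rightarrow> ('v set set \<Rightarrow> 'w set set \<Rightarrow> 'w list) \<Rightarrow> 'v set \<Rightarrow> nat
    \<Rightarrow> 'v set set \<times> 'v set set \<Rightarrow> nat" where
  "top_k_hits ob Ph Vs k = (\<lambda>(g1, g2). card {v \<in> Vs. rank (Ph g1 (relabel ob g2)) (ob v) \<le> k})"

definition expected_hits :: "('v set set \<times> 'v set set) pmf \<Rightarrow> ('v \<Rightarrow> 'w)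
    \<Rightarrow> ('v set set \<Rightarrow> 'w set set \<Rightarrow> 'w list) \<Rightarrow> 'v set \<Rightarrow> nat \<Rightarrow> real" where
  "expected_hits F ob Ph Vs k =
     (\<Sum>v\<in>Vs. measure_pmf.prob F {(g1, g2). rank (Ph g1 (relabel ob g2)) (ob v) \<le> k})"

lemma loss1_eq_expected_hits:
  "loss1 F ob Ph Vs k = (card Vs - expected_hits F ob Ph Vs k) / card Vs"
proof -
  have "measure_pmf.prob F {(g1, g2). k + 1 \<le> rank (Ph g1 (relabel ob g2)) (ob v)} =
      1 - measure_pmf.prob F {(g1, g2). rank (Ph g1 (relabel ob g2)) (ob v) \<le> k}" for v
  proof -
    have "{(g1, g2). k + 1 \<le> rank (Ph g1 (relabel ob g2)) (ob v)} =
        space (measure_pmf F) - {(g1, g2). rank (Ph g1 (relabel ob g2)) (ob v) \<le> k}"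
      by auto
    then show ?thesis
      using measure_pmf.prob_compl[of "{(g1, g2). rank (Ph g1 (relabel ob g2)) (ob v) \<le> k}" F]
      by simp
  qed
  then show ?thesis
    unfolding loss1_def expected_hits_def by (simp add: sum_subtractf)
qed

lemma loss2_eq_expected_hits: "loss2 F ob Ph Vs k = 1 - expected_hits F ob Ph Vs k / k"
  unfolding loss2_def expected_hits_def by simp

lemma expected_hits_eq_sum_pmf:
  assumes "finite (set_pmf F)" "finite Vs"
  shows "expected_hits F ob Ph Vs k = (\<Sum>x\<in>set_pmf F. pmf F x * top_k_hits ob Ph Vs k x)"
  unfolding expected_hits_def top_k_hits_def
  using sum_prob_eq_sum_pmf_card[OF assms(2,1) order_refl] by (simp add: case_prod_beta)

lemma sum_over_cls:
  assumes "finite X" "X \<subseteq> Ga V1 V2 Vs"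
  shows "sum f X = (\<Sum>C\<in>(\<lambda>(g1, g2). cls V1 V2 Vs g1 g2) ` X. sum f (X \<inter> C))"
proof -
  let ?cl = "\<lambda>(g1, g2). cls V1 V2 Vs g1 g2"
  have "sum f X = (\<Sum>C\<in>?cl ` X. sum f {x \<in> X. ?cl x = C})"
    using assms(1) by (rule sum.image_gen)
  also have "\<dots> = (\<Sum>C\<in>?cl ` X. sum f (X \<inter> C))"
  proof (rule sum.cong[OF refl])
    fix C
    assume "C \<in> ?cl ` X"
    then obtain a1 a2 where a: "(a1, a2) \<in> X" and C: "C = cls V1 V2 Vs a1 a2"
      by auto
    have "cls V1 V2 Vs x1 x2 = C \<longleftrightarrow> (x1, x2) \<in> C" if "(x1, x2) \<in> X" for x1 x2
      using cls_refl[of x1 x2] cls_eq[of a1 a2 V1 V2 Vs x1 x2] a that assms(2) C by blast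
    then have "{x \<in> X. ?cl x = C} = X \<inter> C"
      by auto
    then show "sum f {x \<in> X. ?cl x = C} = sum f (X \<inter> C)"
      by simp
  qed
  finally show ?thesis .
qed

lemma class_hits_sum:
  assumes "finite (set_pmf F)" "finite T" "\<And>w. w \<in> T \<Longrightarrow> A w \<subseteq> C"
  shows "(\<Sum>x\<in>set_pmf F \<inter> C. pmf F x * card {w \<in> T. x \<in> A w}) =
    measure_pmf.prob F C * (\<Sum>w\<in>T. cond_prob F (A w) C)"
proof -
  have "(\<Sum>x\<in>set_pmf F \<inter> C. pmf F x * card {w \<in> T. x \<in> A w}) = (\<Sum>w\<in>T. measure_pmf.prob F (A w))"
    using assms by (intro sum_prob_eq_sum_pmf_card[symmetric]) auto
  also have "\<dots> = measure_pmf.prob F C * (\<Sum>w\<in>T. cond_prob F (A w) C)"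
    by (simp add: sum_distrib_left prob_eq_mult_cond_prob[OF assms(3)])
  finally show ?thesis .
qed

lemma bayes_construction_representative:
  assumes "bayes_construction F V1 V2 W Vs ob Phs" "(a1, a2) \<in> Ga V1 V2 Vs"
  obtains r1 r2 where "(r1, r2) \<in> cls V1 V2 Vs a1 a2"
    "greedy_ordering W (\<lambda>u. cond_prob F (cls_in V1 V2 Vs ob r1 r2 u Vs) (cls V1 V2 Vs r1 r2))
      (Phs r1 (relabel ob r2))"
    "\<And>g1 g2. (g1, g2) \<in> cls V1 V2 Vs a1 a2 \<Longrightarrow> \<exists>\<sigma>. is_iso W W \<sigma> (relabel ob r2) (relabel ob g2) \<and>
      Phs g1 (relabel ob g2) = map \<sigma> (Phs r1 (relabel ob r2))"
proof -
  have "\<exists>(r1, r2) \<in> cls V1 V2 Vs a1 a2.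
        greedy_ordering W (\<lambda>u. cond_prob F (cls_in V1 V2 Vs ob r1 r2 u Vs) (cls V1 V2 Vs r1 r2))
          (Phs r1 (relabel ob r2)) \<and>
        (\<forall>(g1', g2') \<in> cls V1 V2 Vs a1 a2. \<exists>\<sigma>.
           is_iso W W \<sigma> (relabel ob r2) (relabel ob g2') \<and>
           Phs g1' (relabel ob g2') = map \<sigma> (Phs r1 (relabel ob r2)))"
    using bspec[OF assms(1)[unfolded bayes_construction_def] assms(2)] by (simp only: case_prod_conv)
  then show ?thesis
    using that by fast
qed

lemma class_hits_le_bayes:
  assumes Vs: "Vs \<subseteq> V1 \<inter> V2" and ob: "bij_betw ob V2 W" and fin: "finite (set_pmf F)"
    and bayes: "bayes_construction F V1 V2 W Vs ob Phs" and vn: "vn_scheme V1 V2 W Phi"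
    and a: "(a1, a2) \<in> Ga V1 V2 Vs"
  defines "C \<equiv> cls V1 V2 Vs a1 a2"
  shows "(\<Sum>x\<in>set_pmf F \<inter> C. pmf F x * top_k_hits ob (\<lambda>g1 h. Phi g1 h Vs) Vs k x)
    \<le> (\<Sum>x\<in>set_pmf F \<inter> C. pmf F x * top_k_hits ob Phs Vs k x)"
proof -
  obtain r1 r2 where rC: "(r1, r2) \<in> C"
    and greedy: "greedy_ordering W
      (\<lambda>u. cond_prob F (cls_in V1 V2 Vs ob r1 r2 u Vs) (cls V1 V2 Vs r1 r2)) (Phs r1 (relabel ob r2))"
    and transport: "\<And>g1 g2. (g1, g2) \<in> C \<Longrightarrow> \<exists>\<sigma>. is_iso W W \<sigma> (relabel ob r2) (relabel ob g2) \<and>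
      Phs g1 (relabel ob g2) = map \<sigma> (Phs r1 (relabel ob r2))"
    using bayes_construction_representative[OF bayes a] unfolding C_def by metis
  have r: "(r1, r2) \<in> Ga V1 V2 Vs" and C: "C = cls V1 V2 Vs r1 r2"
    using rC cls_eq[OF a] by (auto simp: C_def mem_cls_iff)
  note greedy = greedy[folded C]
  define A where "A w = cls_in V1 V2 Vs ob r1 r2 w Vs" for w
  define L where "L = Phi r1 (relabel ob r2) Vs"
  define Ls where "Ls = Phs r1 (relabel ob r2)"
  have Ls: "is_ordering W Ls"
    using greedy unfolding greedy_ordering_def Ls_def by blast
  have "is_ordering W L"
    using vn_scheme_is_ordering[OF vn _ _ Vs ob] r unfolding L_def by (simp add: Ga_def)
  have hits_Phi: "top_k_hits ob (\<lambda>g1 h. Phi g1 h Vs) Vs k x = card {w \<in> set (take k L). x \<in> A w}"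
    if "x \<in> C" for x
    using card_hits_vn_scheme[OF vn ob Vs r] that C
    unfolding top_k_hits_def L_def A_def by (auto split: prod.split)
  have hits_Phs: "top_k_hits ob Phs Vs k x = card {w \<in> set (take k Ls). x \<in> A w}"
    if xC: "x \<in> C" for x
  proof -
    obtain g1 g2 where x: "x = (g1, g2)"
      by fastforce
    obtain \<sigma> where \<sigma>: "is_iso W W \<sigma> (relabel ob r2) (relabel ob g2)"
      and Phs: "Phs g1 (relabel ob g2) = map \<sigma> Ls"
      using transport xC unfolding x Ls_def by blast
    have "(g1, g2) \<in> cls V1 V2 Vs r1 r2"
      using xC C x by simp
    then show ?thesis
      using card_hits_map[OF ob _ r _ \<sigma> Ls] Vs unfolding x top_k_hits_def A_def by (simp add: Phs)
  qed
  have A: "A w \<subseteq> C" for w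
    unfolding A_def C using cls_in_subset_cls .
  have "(\<Sum>x\<in>set_pmf F \<inter> C. pmf F x * top_k_hits ob (\<lambda>g1 h. Phi g1 h Vs) Vs k x)
      = measure_pmf.prob F C * (\<Sum>w\<in>set (take k L). cond_prob F (A w) C)"
    using hits_Phi class_hits_sum[OF fin, of "set (take k L)" A C] A by simp
  also have "\<dots> \<le> measure_pmf.prob F C * (\<Sum>w\<in>set (take k Ls). cond_prob F (A w) C)"
    using sum_take_le_greedy[OF greedy[folded A_def Ls_def] \<open>is_ordering W L\<close>]
    by (intro mult_left_mono) auto
  also have "\<dots> = (\<Sum>x\<in>set_pmf F \<inter> C. pmf F x * top_k_hits ob Phs Vs k x)"
    using hits_Phs class_hits_sum[OF fin, of "set (take k Ls)" A C] A by simp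
  finally show ?thesis .
qed

lemma expected_hits_le_bayes:
  assumes "finite V1" "finite V2" and Vs: "Vs \<subseteq> V1 \<inter> V2" and ob: "bij_betw ob V2 W"
    and supp: "set_pmf F \<subseteq> Ga V1 V2 Vs" and bayes: "bayes_construction F V1 V2 W Vs ob Phs"
    and vn: "vn_scheme V1 V2 W Phi"
  shows "expected_hits F ob (\<lambda>g1 h. Phi g1 h Vs) Vs k \<le> expected_hits F ob Phs Vs k"
proof -
  let ?cl = "\<lambda>(g1, g2). cls V1 V2 Vs g1 g2"
  have fin: "finite (set_pmf F)"
    using finite_subset[OF supp finite_Ga] assms(1,2) by blast
  have "finite Vs"
    using Vs assms(1) finite_subset by blast
  have by_cls: "expected_hits F ob Ph Vs k =
      (\<Sum>C\<in>?cl ` set_pmf F. \<Sum>x\<in>set_pmf F \<inter> C. pmf F x * top_k_hits ob Ph Vs k x)" for Ph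
    unfolding expected_hits_eq_sum_pmf[OF fin \<open>finite Vs\<close>] by (rule sum_over_cls[OF fin supp])
  have "expected_hits F ob (\<lambda>g1 h. Phi g1 h Vs) Vs k =
      (\<Sum>C\<in>?cl ` set_pmf F. \<Sum>x\<in>set_pmf F \<inter> C. pmf F x * top_k_hits ob (\<lambda>g1 h. Phi g1 h Vs) Vs k x)"
    by (rule by_cls)
  also have "\<dots> \<le> (\<Sum>C\<in>?cl ` set_pmf F. \<Sum>x\<in>set_pmf F \<inter> C. pmf F x * top_k_hits ob Phs Vs k x)"
  proof (rule sum_mono)
    fix C
    assume "C \<in> ?cl ` set_pmf F"
    then obtain a1 a2 where "(a1, a2) \<in> Ga V1 V2 Vs" "C = cls V1 V2 Vs a1 a2"
      using supp by auto
    then show "(\<Sum>x\<in>set_pmf F \<inter> C. pmf F x * top_k_hits ob (\<lambda>g1 h. Phi g1 h Vs) Vs k x)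
        \<le> (\<Sum>x\<in>set_pmf F \<inter> C. pmf F x * top_k_hits ob Phs Vs k x)"
      using class_hits_le_bayes[OF Vs ob fin bayes vn] by simp
  qed
  also have "\<dots> = expected_hits F ob Phs Vs k"
    by (rule by_cls[symmetric])
  finally show ?thesis .
qed

theorem mainTheorem3:
  fixes n m :: nat
    and V1 V2 Vs :: "'v set"
    and W :: "'w set"
    and ob :: "'v \<Rightarrow> 'w"
    and F :: "('v set set \<times> 'v set set) pmf"
    and Phs :: "'v set set \<Rightarrow> 'w set set \<Rightarrow> 'w list"
  assumes "nominatable V1 V2 F"
    and "card V1 = n" and "card V2 = m"
    and "Vs \<subseteq> V1 \<inter> V2"
    and "bij_betw ob V2 W"
    and "set_pmf F \<subseteq> Ga V1 V2 Vs"
    and "bayes_construction F V1 V2 W Vs ob Phs"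
  shows "\<forall>k \<in> {1..m - 1}. \<forall>Phi. vn_scheme V1 V2 W Phi \<longrightarrow>
           loss1 F ob Phs Vs k \<le> loss1 F ob (\<lambda>g1 h. Phi g1 h Vs) Vs k \<and>
           loss2 F ob Phs Vs k \<le> loss2 F ob (\<lambda>g1 h. Phi g1 h Vs) Vs k"
proof (intro ballI allI impI)
  fix k Phi
  assume vn: "vn_scheme V1 V2 W Phi"
  have "finite V1" "finite V2"
    using assms(1) by (auto simp: nominatable_def)
  then have hits: "expected_hits F ob (\<lambda>g1 h. Phi g1 h Vs) Vs k \<le> expected_hits F ob Phs Vs k"
    using expected_hits_le_bayes assms(4-7) vn by blast
  then show "loss1 F ob Phs Vs k \<le> loss1 F ob (\<lambda>g1 h. Phi g1 h Vs) Vs k \<and>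
      loss2 F ob Phs Vs k \<le> loss2 F ob (\<lambda>g1 h. Phi g1 h Vs) Vs k"
    unfolding loss1_eq_expected_hits loss2_eq_expected_hits
    using hits by (simp add: divide_right_mono)
qed

end
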